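(* Let $d\ge1$, $0<s<d$, and let $\nu$ be a Frostman measure on a compact set $E\subset\mathbb{R}^d$ with $\dim_{\mathcal H}(E)>s$. For $\delta\in(0,1]$ and $\alpha\in\mathbb{C}$ with $\operatorname{Re}(\alpha)=d-s$, let $\nu^\delta_\alpha$ be as defined below. Then $\|\nu^\delta_\alpha\|_{L^\infty(\mathbb{R}^d)}\lesssim1$ with a constant independent of $\delta$.
   Context: A Frostman measure on $E$ is a Borel probability measure supported on $E$ with $\nu(B(x,r))\le Cr^{s'}$ for all $x\in\mathbb{R}^d$, $r>0$, for some $s'>s$. Let $\rho$ be a nonnegative smooth function on $\mathbb{R}^d$ with $\int\rho=1$, supported in the unit ball and equal to $1$ near the origin at scale $1/4$; set $\rho_\delta(x)=\delta^{-d}\rho(x/\delta)$ and $\nu^\delta=\nu*\rho_\delta$. For $\operatorname{Re}(\beta)>0$, $\nu^\delta_\beta(x)=\frac{2^{(d-\beta)/2}}{\Gamma(\beta/2)}(\nu^\delta*|\cdot|^{-d+\beta})(x)$. *)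

theory Defs
  imports "HOL-Probability.Probability"
begin

fun iter_pderiv :: "'a::euclidean_space list \<Rightarrow> ('a \<Rightarrow> real) \<Rightarrow> 'a \<Rightarrow> real" where
  "iter_pderiv [] f = f"
| "iter_pderiv (v # vs) f = (\<lambda>x. frechet_derivative (iter_pderiv vs f) (at x) v)"

definition smooth_fun :: "('a::euclidean_space \<Rightarrow> real) \<Rightarrow> bool" where
  "smooth_fun f \<longleftrightarrow> (\<forall>vs. set vs \<subseteq> Basis \<longrightarrow> iter_pderiv vs f differentiable_on UNIV)"

definition hausdorff_content :: "real \<Rightarrow> 'a::euclidean_space set \<Rightarrow> ennreal" where
  "hausdorff_content t E =
     Inf {(\<Sum>i. ennreal (diameter (U i) powr t)) | U :: nat \<Rightarrow> 'a set.
            (\<forall>i. bounded (U i)) \<and> E \<subseteq> (\<Union>i. U i)}"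

definition hausdorff_dim :: "'a::euclidean_space set \<Rightarrow> real" where
  "hausdorff_dim E = Inf {t. 0 \<le> t \<and> hausdorff_content t E = 0}"

definition frostman :: "'a::euclidean_space measure \<Rightarrow> 'a set \<Rightarrow> real \<Rightarrow> bool" where
  "frostman nu E s \<longleftrightarrow> prob_space nu \<and> sets nu = sets borel \<and> E \<in> sets borel \<and>
     measure nu E = 1 \<and>
     (\<exists>C s'. s' > s \<and> (\<forall>x r. r > 0 \<longrightarrow> measure nu (ball x r) \<le> C * r powr s'))"

definition bump :: "('a::euclidean_space \<Rightarrow> real) \<Rightarrow> bool" where
  "bump rho \<longleftrightarrow> (\<forall>x. 0 \<le> rho x) \<and> smooth_fun rho \<and>
     integrable lborel rho \<and> integral\<^sup>L lborel rho = 1 \<and>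
     (\<forall>x. rho x \<noteq> 0 \<longrightarrow> norm x \<le> 1) \<and>
     (\<forall>x. norm x \<le> 1/4 \<longrightarrow> rho x = 1)"

definition rho_delta :: "('a::euclidean_space \<Rightarrow> real) \<Rightarrow> real \<Rightarrow> 'a \<Rightarrow> real" where
  "rho_delta rho \<delta> x = (1 / \<delta> ^ DIM('a)) * rho ((1 / \<delta>) *\<^sub>R x)"

definition nu_delta :: "'a::euclidean_space measure \<Rightarrow> ('a \<Rightarrow> real) \<Rightarrow> real \<Rightarrow> 'a \<Rightarrow> real" where
  "nu_delta nu rho \<delta> x = (\<integral>y. rho_delta rho \<delta> (x - y) \<partial>nu)"

definition nu_delta_beta ::
  "'a::euclidean_space measure \<Rightarrow> ('a \<Rightarrow> real) \<Rightarrow> real \<Rightarrow> complex \<Rightarrow> 'a \<Rightarrow> complex" where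
  "nu_delta_beta nu rho \<delta> \<beta> x =
     2 powr ((of_nat DIM('a) - \<beta>) / 2) / Gamma (\<beta> / 2) *
     (\<integral>y. of_real (nu_delta nu rho \<delta> y) *
            of_real (norm (x - y)) powr (\<beta> - of_nat DIM('a)) \<partial>lborel)"

end

theory Submission
  imports Defs "HOL-Analysis.Ball_Volume"
begin

text \<open>Since \<open>Re \<alpha> = d - s\<close>, the integrand of \<open>nu_delta_beta\<close> has modulus
  \<open>nu^\<delta>(y) |x - y|^(-s)\<close>, so it suffices to bound \<open>\<integral> nu^\<delta>(y) |x - y|^(-s) dy\<close> uniformly in
  \<open>\<delta>\<close> and \<open>x\<close>. By Tonelli this is \<open>\<integral>\<integral> rho_\<delta>(y - z) |x - y|^(-s) dy d\<nu>(z)\<close>. Since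
  \<open>rho_\<delta> \<le> sup rho * \<delta>^(-d)\<close> on a \<open>\<delta>\<close>-ball, the inner integral is at most a constant times
  \<open>|x - z|^(-s)\<close>: the kernel integral over \<open>B(z, \<delta>)\<close> is \<open>O(\<delta>^d |x - z|^(-s))\<close>, directly when
  \<open>|x - z| \<ge> 2\<delta>\<close> and by summing over dyadic shells around \<open>x\<close> otherwise. The same dyadic
  summation bounds \<open>\<integral> |x - z|^(-s) d\<nu>(z)\<close>, because the Frostman exponent of \<open>\<nu>\<close> exceeds \<open>s\<close>.\<close>

lemma exists_dyadic_shell:
  fixes d R :: real
  assumes "0 < d" "d \<le> R"
  shows "\<exists>k::nat. R / 2^(Suc k) < d \<and> d \<le> R / 2^k"
proof -
  obtain n where "R / d < 2^n" using real_arch_pow[of 2 "R/d"] by auto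
  hence ex: "R / 2^n < d" using assms by (simp add: field_simps)
  define m where "m = (LEAST n. R / 2^n < d)"
  have m: "R / 2^m < d" unfolding m_def by (rule LeastI[of _ n]) (rule ex)
  then obtain k where k: "m = Suc k" using assms by (cases m) auto
  have "\<not> R / 2^k < d" using Least_le[of "\<lambda>n. R / 2^n < d" k] k m_def by fastforce
  thus ?thesis using m k by auto
qed

lemma dyadic_shell_term_eq:
  fixes R s t A :: real
  assumes "R > 0"
  shows "(R / 2^(Suc k)) powr (-s) * (A * (R/2^k) powr t)
    = A * 2 powr s * R powr (t-s) * (2 powr (s-t))^k"
proof -
  have p: "(2::real)^n = 2 powr (real n)" for n by (simp add: powr_realpow)
  have e1: "(R / 2^(Suc k)) powr (-s) = R powr (-s) * (2 powr s * 2 powr (s * real k))"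
    using assms by (simp only: p powr_divide powr_powr powr_minus_divide)
      (simp add: powr_minus divide_simps powr_add distrib_left mult_ac)
  have e2: "(R/2^k) powr t = R powr t / 2 powr (t * real k)"
    using assms by (simp only: p powr_divide powr_powr mult.commute)
  have "(2 powr (s-t))^k = (2::real) powr ((s - t) * real k)"
    by (simp add: powr_power mult.commute)
  also have "\<dots> = 2 powr (s * real k - t * real k)"
    by (simp add: left_diff_distrib)
  finally have e3: "(2 powr (s-t))^k = 2 powr (s * real k) / 2 powr (t * real k)"
    by (simp only: powr_diff)
  have e4: "R powr (t - s) = R powr t * R powr (-s)" using powr_add[of R t "-s"] by simp
  show ?thesis unfolding e1 e2 e3 e4 by (simp add: field_simps)
qed

text \<open>Dyadic shells: on the shell where \<open>dist x y\<close> is comparable to \<open>R/2^k\<close> the kernel is at most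
  \<open>(R/2^(k+1)) powr (-s)\<close>, and the shell measures are summed as a geometric series with ratio
  \<open>2 powr (s - t) < 1\<close>.\<close>
lemma nn_integral_cball_dist_powr_le:
  fixes \<mu> :: "'a::euclidean_space measure" and x :: 'a
  assumes sets: "sets \<mu> = sets borel" and s: "0 < s" "s < t" and A: "A \<ge> 0" and R: "R > 0"
    and growth: "\<And>r. r > 0 \<Longrightarrow> emeasure \<mu> (cball x r) \<le> ennreal (A * r powr t)"
  shows "(\<integral>\<^sup>+y. indicator (cball x R) y * ennreal (dist x y powr (-s)) \<partial>\<mu>)
     \<le> ennreal (A * 2 powr s * R powr (t-s) / (1 - 2 powr (s-t)))"
proof -
  have [measurable_cong]: "sets \<mu> = sets borel" by (rule sets)
  have [measurable]: "\<And>r. cball x r \<in> sets borel" by simp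
  define c where "c k = (R / 2^(Suc k)) powr (-s)" for k :: nat
  define q where "q = 2 powr (s - t)"
  have q: "0 < q" "q < 1" using s unfolding q_def by (auto intro: powr_less_one)
  have shells: "indicator (cball x R) y * ennreal (dist x y powr (-s))
      \<le> (\<Sum>k. ennreal (c k) * indicator (cball x (R/2^k)) y)" for y
  proof (cases "y \<in> cball x R \<and> y \<noteq> x")
    case True
    hence "0 < dist x y" "dist x y \<le> R" by auto
    then obtain k where k: "R / 2^(Suc k) < dist x y" "dist x y \<le> R / 2^k"
      using exists_dyadic_shell by blast
    have "dist x y powr (-s) \<le> c k" unfolding c_def
      using k s R by (intro powr_mono2') auto
    hence "indicator (cball x R) y * ennreal (dist x y powr (-s))
        \<le> ennreal (c k) * indicator (cball x (R/2^k)) y"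
      using True k by (auto simp: indicator_def intro: ennreal_leI)
    also have "\<dots> \<le> (\<Sum>k. ennreal (c k) * indicator (cball x (R/2^k)) y)"
      using sum_le_suminf[OF summableI _ zero_le, of "{k}"] by simp
    finally show ?thesis .
  qed (auto simp: indicator_def)
  have "(\<integral>\<^sup>+y. indicator (cball x R) y * ennreal (dist x y powr (-s)) \<partial>\<mu>)
      \<le> (\<integral>\<^sup>+y. (\<Sum>k. ennreal (c k) * indicator (cball x (R/2^k)) y) \<partial>\<mu>)"
    by (intro nn_integral_mono shells)
  also have "\<dots> = (\<Sum>k. ennreal (c k) * emeasure \<mu> (cball x (R/2^k)))"
    by (subst nn_integral_suminf) (auto simp: sets intro!: suminf_cong nn_integral_cmult_indicator)
  also have "\<dots> \<le> (\<Sum>k. ennreal (A * 2 powr s * R powr (t-s) * q^k))"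
  proof (intro suminf_le summableI)
    fix k :: nat
    have "ennreal (c k) * emeasure \<mu> (cball x (R/2^k)) \<le> ennreal (c k) * ennreal (A * (R/2^k) powr t)"
      using growth[of "R/2^k"] R by (intro mult_left_mono) auto
    also have "\<dots> = ennreal (c k * (A * (R/2^k) powr t))"
      by (simp add: c_def ennreal_mult')
    also have "\<dots> = ennreal (A * 2 powr s * R powr (t-s) * q^k)"
      unfolding c_def q_def using R by (simp only: dyadic_shell_term_eq)
    finally show "ennreal (c k) * emeasure \<mu> (cball x (R/2^k)) \<le> ennreal (A * 2 powr s * R powr (t-s) * q^k)" .
  qed
  also have "\<dots> = ennreal (A * 2 powr s * R powr (t-s) / (1 - 2 powr (s-t)))"
    using q A sums_mult[OF geometric_sums[of q], of "A * 2 powr s * R powr (t-s)"]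
    by (intro suminf_ennreal_eq) (auto simp: q_def divide_simps)
  finally show ?thesis .
qed

lemma nn_integral_dist_powr_le:
  fixes \<mu> :: "'a::euclidean_space measure" and x :: 'a
  assumes sets: "sets \<mu> = sets borel" and s: "0 < s" "s < t" and A: "A \<ge> 0"
    and growth: "\<And>r. r > 0 \<Longrightarrow> emeasure \<mu> (cball x r) \<le> ennreal (A * r powr t)"
  shows "(\<integral>\<^sup>+y. ennreal (dist x y powr (-s)) \<partial>\<mu>)
     \<le> ennreal (A * 2 powr s / (1 - 2 powr (s-t))) + emeasure \<mu> (space \<mu>)"
proof -
  have [measurable_cong]: "sets \<mu> = sets borel" by (rule sets)
  have [measurable]: "cball x 1 \<in> sets borel" by simp
  have "(\<integral>\<^sup>+y. ennreal (dist x y powr (-s)) \<partial>\<mu>)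
      \<le> (\<integral>\<^sup>+y. indicator (cball x 1) y * ennreal (dist x y powr (-s)) + 1 \<partial>\<mu>)"
  proof (intro nn_integral_mono)
    fix y
    show "ennreal (dist x y powr (-s)) \<le> indicator (cball x 1) y * ennreal (dist x y powr (-s)) + 1"
    proof (cases "dist x y \<le> 1")
      case False
      hence "dist x y powr (-s) \<le> 1 powr (-s)" using s by (intro powr_mono2') auto
      thus ?thesis using False by (simp add: ennreal_leI)
    qed simp
  qed
  also have "\<dots> = (\<integral>\<^sup>+y. indicator (cball x 1) y * ennreal (dist x y powr (-s)) \<partial>\<mu>) + emeasure \<mu> (space \<mu>)"
    by (subst nn_integral_add) auto
  also have "\<dots> \<le> ennreal (A * 2 powr s / (1 - 2 powr (s-t))) + emeasure \<mu> (space \<mu>)"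
    using nn_integral_cball_dist_powr_le[OF sets s A _ growth, of 1] by (intro add_right_mono) simp
  finally show ?thesis .
qed

lemma emeasure_singleton_eq_0_of_growth:
  fixes \<mu> :: "'a::euclidean_space measure" and x :: 'a
  assumes sets: "sets \<mu> = sets borel" and t: "t > 0" and A: "A \<ge> 0"
    and growth: "\<And>r. r > 0 \<Longrightarrow> emeasure \<mu> (cball x r) \<le> ennreal (A * r powr t)"
  shows "emeasure \<mu> {x} = 0"
proof -
  have small: "emeasure \<mu> {x} \<le> ennreal e" if e: "e > 0" for e
  proof -
    define r where "r = (e / (A + 1)) powr (1 / t)"
    have r: "r > 0" unfolding r_def using e A by simp
    have "r powr t * (A + 1) = e" unfolding r_def using e t A by (simp add: powr_powr)
    hence rt: "A * r powr t + r powr t = e" by (simp add: algebra_simps)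
    have "emeasure \<mu> {x} \<le> emeasure \<mu> (cball x r)"
      using r sets by (intro emeasure_mono) auto
    also have "\<dots> \<le> ennreal (A * r powr t)" using growth[OF r] .
    also have "A * r powr t \<le> e"
      using rt powr_ge_zero[of r t] by linarith
    finally show ?thesis by (simp add: ennreal_leI)
  qed
  have "emeasure \<mu> {x} \<le> 0" by (rule ennreal_le_epsilon) (simp add: small)
  thus ?thesis by simp
qed

lemma frostman_cball_growth:
  assumes "frostman nu E s"
  obtains t A where "s < t" "A \<ge> 0"
    "\<And>x r. r > 0 \<Longrightarrow> emeasure nu (cball x r) \<le> ennreal (A * r powr t)"
proof -
  obtain C t where "prob_space nu" and sets: "sets nu = sets borel" and t: "s < t"
    and ball: "\<And>x r. r > 0 \<Longrightarrow> measure nu (ball x r) \<le> C * r powr t"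
    using assms unfolding frostman_def by blast
  interpret prob_space nu by fact
  have C: "C \<ge> 0" using ball[of 1 0] measure_nonneg[of nu "ball 0 1"] by (simp del: measure_nonneg)
  have growth: "emeasure nu (cball x r) \<le> ennreal ((C * 2 powr t) * r powr t)" if r: "r > 0" for x r
  proof -
    have "emeasure nu (cball x r) \<le> emeasure nu (ball x (2*r))"
      using r sets by (intro emeasure_mono) auto
    also have "\<dots> \<le> ennreal (C * (2*r) powr t)"
      using ball[of "2*r" x] r by (simp add: emeasure_eq_measure ennreal_leI)
    finally show ?thesis using r by (simp add: powr_mult mult.assoc)
  qed
  have "C * 2 powr t \<ge> 0" using C by simp
  from t this growth show ?thesis by (rule that)
qed

lemma frostman_emeasure_singleton:
  assumes "frostman nu E s" and "0 \<le> s"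
  shows "emeasure nu {x} = 0"
proof -
  obtain t A where "s < t" "A \<ge> 0"
    and "\<And>x r. r > 0 \<Longrightarrow> emeasure nu (cball x r) \<le> ennreal (A * r powr t)"
    using frostman_cball_growth[OF assms(1)] by metis
  moreover have "sets nu = sets borel" using assms(1) by (simp add: frostman_def)
  ultimately show ?thesis using assms(2) by (intro emeasure_singleton_eq_0_of_growth) auto
qed

lemma frostman_nn_integral_dist_powr_bounded:
  assumes "frostman nu E s" and "0 < s"
  obtains N where "N \<ge> 0" "\<And>x. (\<integral>\<^sup>+z. ennreal (dist x z powr (-s)) \<partial>nu) \<le> ennreal N"
proof -
  have "prob_space nu" and sets: "sets nu = sets borel"
    using assms(1) by (simp_all add: frostman_def)
  obtain t A where t: "s < t" and A: "A \<ge> 0"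
    and growth: "\<And>x r. r > 0 \<Longrightarrow> emeasure nu (cball x r) \<le> ennreal (A * r powr t)"
    using frostman_cball_growth[OF assms(1)] by metis
  define N where "N = A * 2 powr s / (1 - 2 powr (s - t))"
  have N: "N \<ge> 0" unfolding N_def using A t powr_less_one[of 2 "s - t"] by simp
  have "(\<integral>\<^sup>+z. ennreal (dist x z powr (-s)) \<partial>nu) \<le> ennreal (N + 1)" for x
    using nn_integral_dist_powr_le[OF sets assms(2) t A growth] N
      prob_space.emeasure_space_1[OF \<open>prob_space nu\<close>]
    by (simp add: N_def ennreal_plus[symmetric])
  with N show ?thesis by (intro that[of "N + 1"]) auto
qed

lemma emeasure_lborel_cball_powr:
  fixes c :: "'a::euclidean_space"
  assumes "r > 0"
  shows "emeasure lborel (cball c r) = ennreal (unit_ball_vol DIM('a) * r powr DIM('a))"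
  using assms by (subst emeasure_cball) (auto simp: powr_realpow)

lemma nn_integral_lborel_cball_dist_powr_le_far:
  fixes x z :: "'a::euclidean_space" and s :: real
  assumes s: "0 < s" and \<delta>: "\<delta> > 0" and far: "2 * \<delta> \<le> dist x z"
  shows "(\<integral>\<^sup>+y. indicator (cball z \<delta>) y * ennreal (dist x y powr (-s)) \<partial>lborel)
    \<le> ennreal (2 powr s * unit_ball_vol DIM('a) * \<delta> powr DIM('a) * dist x z powr (-s))"
proof -
  define r where "r = dist x z"
  have r: "r > 0" using \<delta> far unfolding r_def by linarith
  have "indicator (cball z \<delta>) y * ennreal (dist x y powr (-s))
      \<le> ennreal ((r/2) powr (-s)) * indicator (cball z \<delta>) y" for y
  proof (cases "y \<in> cball z \<delta>")
    case True
    hence "r / 2 \<le> dist x y"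
      using dist_triangle[of x z y] far unfolding r_def by (simp add: dist_commute)
    hence "dist x y powr (-s) \<le> (r/2) powr (-s)" using r s by (intro powr_mono2') auto
    thus ?thesis using True by (simp add: ennreal_leI)
  qed simp
  hence "(\<integral>\<^sup>+y. indicator (cball z \<delta>) y * ennreal (dist x y powr (-s)) \<partial>lborel)
      \<le> ennreal ((r/2) powr (-s)) * emeasure lborel (cball z \<delta>)"
    by (subst nn_integral_cmult_indicator[symmetric]) (auto intro: nn_integral_mono)
  also have "\<dots> = ennreal ((r/2) powr (-s) * (unit_ball_vol DIM('a) * \<delta> powr DIM('a)))"
    using \<delta> by (simp add: emeasure_lborel_cball_powr ennreal_mult')
  also have "(r/2) powr (-s) = 2 powr s * r powr (-s)"
    using r by (simp add: powr_divide powr_minus divide_simps)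
  finally show ?thesis unfolding r_def by (simp add: ac_simps)
qed

text \<open>Near the pole the small ball lies in \<open>cball x (3 \<delta>)\<close>, whose kernel integral is of order
  \<open>\<delta> powr (d - s)\<close>, and \<open>\<delta> powr (-s) \<le> (dist x z / 2) powr (-s)\<close>.\<close>
lemma nn_integral_lborel_cball_dist_powr_le_near:
  fixes x z :: "'a::euclidean_space" and s :: real
  defines "L \<equiv> unit_ball_vol DIM('a) * 2 powr s / (1 - 2 powr (s - DIM('a))) * 3 powr (DIM('a) - s)"
  assumes s: "0 < s" "s < DIM('a)" and \<delta>: "\<delta> > 0" and near: "dist x z < 2 * \<delta>" and "z \<noteq> x"
  shows "(\<integral>\<^sup>+y. indicator (cball z \<delta>) y * ennreal (dist x y powr (-s)) \<partial>lborel)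
    \<le> ennreal (2 powr s * L * \<delta> powr DIM('a) * dist x z powr (-s))"
proof -
  define D where "D = real DIM('a)"
  have L: "L \<ge> 0"
    using s powr_less_one[of 2 "s - DIM('a)"] unfolding L_def by simp
  have r: "dist x z > 0" using \<open>z \<noteq> x\<close> by simp
  have [measurable]: "\<And>(c::'a) r. cball c r \<in> sets borel" by simp
  have "cball z \<delta> \<subseteq> cball x (3 * \<delta>)"
  proof
    fix y assume "y \<in> cball z \<delta>"
    thus "y \<in> cball x (3 * \<delta>)"
      using dist_triangle[of x y z] near by (simp add: dist_commute)
  qed
  hence "(\<integral>\<^sup>+y. indicator (cball z \<delta>) y * ennreal (dist x y powr (-s)) \<partial>lborel)
      \<le> (\<integral>\<^sup>+y. indicator (cball x (3 * \<delta>)) y * ennreal (dist x y powr (-s)) \<partial>lborel)"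
    by (intro nn_integral_mono) (auto simp: indicator_def)
  also have "\<dots> \<le> ennreal (unit_ball_vol D * 2 powr s * (3 * \<delta>) powr (D - s) / (1 - 2 powr (s - D)))"
    using s \<delta> unfolding D_def by (intro nn_integral_cball_dist_powr_le) (auto simp: emeasure_lborel_cball_powr)
  also have "\<dots> \<le> ennreal (2 powr s * L * \<delta> powr D * dist x z powr (-s))"
  proof (rule ennreal_leI)
    have "unit_ball_vol D * 2 powr s * (3 * \<delta>) powr (D - s) / (1 - 2 powr (s - D))
        = L * \<delta> powr D * \<delta> powr (-s)"
      using \<delta> by (simp add: L_def D_def powr_mult powr_add[symmetric])
    also have "\<dots> \<le> L * \<delta> powr D * (dist x z / 2) powr (-s)"
      using near r s L by (intro mult_left_mono powr_mono2') auto
    also have "\<dots> = 2 powr s * L * \<delta> powr D * dist x z powr (-s)"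
      using r by (simp add: powr_divide powr_minus divide_simps)
    finally show "unit_ball_vol D * 2 powr s * (3 * \<delta>) powr (D - s) / (1 - 2 powr (s - D))
        \<le> 2 powr s * L * \<delta> powr D * dist x z powr (-s)" .
  qed
  finally show ?thesis unfolding D_def .
qed

lemma nn_integral_lborel_cball_dist_powr_le:
  fixes s :: real
  assumes s: "0 < s" "s < DIM('a)"
  obtains K where "K \<ge> 0"
    "\<And>(x::'a::euclidean_space) z \<delta>. \<delta> > 0 \<Longrightarrow> z \<noteq> x \<Longrightarrow>
       (\<integral>\<^sup>+y. indicator (cball z \<delta>) y * ennreal (dist x y powr (-s)) \<partial>lborel)
         \<le> ennreal (K * \<delta> powr DIM('a) * dist x z powr (-s))"
proof -
  define V where "V = unit_ball_vol DIM('a)"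
  define L where "L = V * 2 powr s / (1 - 2 powr (s - DIM('a))) * 3 powr (DIM('a) - s)"
  have V: "V \<ge> 0" unfolding V_def by simp
  have L: "L \<ge> 0"
    using s V powr_less_one[of 2 "s - DIM('a)"] unfolding L_def by simp
  have "(\<integral>\<^sup>+y. indicator (cball z \<delta>) y * ennreal (dist x y powr (-s)) \<partial>lborel)
      \<le> ennreal (2 powr s * (V + L) * \<delta> powr DIM('a) * dist x z powr (-s))"
    if \<delta>: "\<delta> > 0" and "z \<noteq> x" for x z :: 'a and \<delta>
  proof (cases "2 * \<delta> \<le> dist x z")
    case True
    with s \<delta> have "(\<integral>\<^sup>+y. indicator (cball z \<delta>) y * ennreal (dist x y powr (-s)) \<partial>lborel)
        \<le> ennreal (2 powr s * V * \<delta> powr DIM('a) * dist x z powr (-s))"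
      unfolding V_def by (intro nn_integral_lborel_cball_dist_powr_le_far)
    also have "\<dots> \<le> ennreal (2 powr s * (V + L) * \<delta> powr DIM('a) * dist x z powr (-s))"
      using L by (intro ennreal_leI mult_right_mono) auto
    finally show ?thesis .
  next
    case False
    with s \<delta> \<open>z \<noteq> x\<close> have "(\<integral>\<^sup>+y. indicator (cball z \<delta>) y * ennreal (dist x y powr (-s)) \<partial>lborel)
        \<le> ennreal (2 powr s * L * \<delta> powr DIM('a) * dist x z powr (-s))"
      unfolding V_def L_def by (intro nn_integral_lborel_cball_dist_powr_le_near) auto
    also have "\<dots> \<le> ennreal (2 powr s * (V + L) * \<delta> powr DIM('a) * dist x z powr (-s))"
      using V by (intro ennreal_leI mult_right_mono) auto
    finally show ?thesis .
  qed
  with L V show ?thesis by (intro that[of "2 powr s * (V + L)"]) auto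
qed

lemma rho_delta_le:
  fixes rho :: "'a::euclidean_space \<Rightarrow> real"
  assumes "\<And>y. rho y \<le> M" and "\<delta> > 0"
  shows "rho_delta rho \<delta> w \<le> M / \<delta> ^ DIM('a)"
  using assms by (simp add: rho_delta_def divide_right_mono)

lemma rho_delta_nonneg:
  fixes rho :: "'a::euclidean_space \<Rightarrow> real"
  assumes "\<And>y. rho y \<ge> 0" and "\<delta> > 0"
  shows "rho_delta rho \<delta> w \<ge> 0"
  using assms by (simp add: rho_delta_def)

lemma rho_delta_le_indicator:
  fixes rho :: "'a::euclidean_space \<Rightarrow> real"
  assumes supp: "\<And>y. rho y \<noteq> 0 \<Longrightarrow> norm y \<le> 1" and M: "\<And>y. rho y \<le> M" and \<delta>: "\<delta> > 0"
  shows "rho_delta rho \<delta> w \<le> M / \<delta> ^ DIM('a) * indicator (cball 0 \<delta>) w"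
proof (cases "w \<in> cball 0 \<delta>")
  case True
  thus ?thesis using rho_delta_le[of rho, OF M \<delta>] by simp
next
  case False
  hence "norm ((1 / \<delta>) *\<^sub>R w) > 1" using \<delta> by (simp add: field_simps)
  hence "rho ((1 / \<delta>) *\<^sub>R w) = 0" using supp by force
  thus ?thesis using False by (simp add: rho_delta_def)
qed

lemma nn_integral_rho_delta_dist_powr_le:
  fixes rho :: "'a::euclidean_space \<Rightarrow> real" and s :: real
  assumes [measurable]: "rho \<in> borel_measurable borel"
    and nonneg: "\<And>y. rho y \<ge> 0" and supp: "\<And>y. rho y \<noteq> 0 \<Longrightarrow> norm y \<le> 1"
    and M: "\<And>y. rho y \<le> M" and s: "0 < s" "s < DIM('a)"
  obtains K where "K \<ge> 0"
    "\<And>x z \<delta>. \<delta> > 0 \<Longrightarrow> z \<noteq> x \<Longrightarrow>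
       (\<integral>\<^sup>+y. ennreal (rho_delta rho \<delta> (y - z) * dist x y powr (-s)) \<partial>lborel)
         \<le> ennreal (K * dist x z powr (-s))"
proof -
  obtain K where K: "K \<ge> 0" and ball: "\<And>(x::'a) z \<delta>. \<delta> > 0 \<Longrightarrow> z \<noteq> x \<Longrightarrow>
       (\<integral>\<^sup>+y. indicator (cball z \<delta>) y * ennreal (dist x y powr (-s)) \<partial>lborel)
         \<le> ennreal (K * \<delta> powr DIM('a) * dist x z powr (-s))"
    using nn_integral_lborel_cball_dist_powr_le[OF s] by blast
  have M0: "M \<ge> 0" using M[of 0] nonneg[of 0] by linarith
  have [measurable]: "\<And>(c::'a) r. cball c r \<in> sets borel" by simp
  have "(\<integral>\<^sup>+y. ennreal (rho_delta rho \<delta> (y - z) * dist x y powr (-s)) \<partial>lborel)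
      \<le> ennreal ((M * K) * dist x z powr (-s))" if \<delta>: "\<delta> > 0" and zx: "z \<noteq> x" for x z :: 'a and \<delta>
  proof -
    define c where "c = M / \<delta> ^ DIM('a)"
    have c: "c \<ge> 0" unfolding c_def using M0 \<delta> by simp
    have pointwise: "ennreal (rho_delta rho \<delta> (y - z) * dist x y powr (-s))
        \<le> ennreal c * (indicator (cball z \<delta>) y * ennreal (dist x y powr (-s)))" for y
    proof -
      have "rho_delta rho \<delta> (y - z) \<le> c * indicator (cball z \<delta>) y"
        using rho_delta_le_indicator[OF supp M \<delta>, where w = "y - z"]
        by (simp add: c_def indicator_def dist_norm norm_minus_commute)
      hence "rho_delta rho \<delta> (y - z) * dist x y powr (-s) \<le> c * indicator (cball z \<delta>) y * dist x y powr (-s)"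
        by (intro mult_right_mono) auto
      hence "ennreal (rho_delta rho \<delta> (y - z) * dist x y powr (-s))
          \<le> ennreal (c * indicator (cball z \<delta>) y * dist x y powr (-s))"
        by (rule ennreal_leI)
      also have "\<dots> = ennreal c * (indicator (cball z \<delta>) y * ennreal (dist x y powr (-s)))"
        using c by (simp add: ennreal_mult indicator_def)
      finally show ?thesis .
    qed
    have "(\<integral>\<^sup>+y. ennreal (rho_delta rho \<delta> (y - z) * dist x y powr (-s)) \<partial>lborel)
        \<le> (\<integral>\<^sup>+y. ennreal c * (indicator (cball z \<delta>) y * ennreal (dist x y powr (-s))) \<partial>lborel)"
      by (intro nn_integral_mono pointwise)
    also have "\<dots> = ennreal c * (\<integral>\<^sup>+y. indicator (cball z \<delta>) y * ennreal (dist x y powr (-s)) \<partial>lborel)"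
      by (intro nn_integral_cmult) measurable
    also have "\<dots> \<le> ennreal c * ennreal (K * \<delta> powr DIM('a) * dist x z powr (-s))"
      using ball[OF \<delta> zx] by (rule mult_left_mono) simp
    also have "\<dots> = ennreal ((M * K) * dist x z powr (-s))"
      using c K \<delta> by (simp add: c_def ennreal_mult'[symmetric] powr_realpow mult.assoc)
    finally show ?thesis .
  qed
  with M0 K show ?thesis by (intro that[of "M * K"]) auto
qed

lemma bump_continuous:
  assumes "bump rho"
  shows "continuous_on UNIV rho"
proof -
  have "iter_pderiv [] rho differentiable_on UNIV"
    using assms unfolding bump_def smooth_fun_def by (metis empty_set empty_subsetI)
  thus ?thesis by (simp add: differentiable_imp_continuous_on)
qed

lemma bump_bounded:
  assumes "bump rho"
  obtains M where "\<And>y. rho y \<le> M"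
proof -
  have "bounded (rho ` cball 0 1)"
    by (intro compact_imp_bounded compact_continuous_image
        continuous_on_subset[OF bump_continuous[OF assms]]) auto
  then obtain a where a: "\<And>y. y \<in> cball 0 1 \<Longrightarrow> norm (rho y) \<le> a"
    unfolding bounded_iff by (metis image_eqI)
  have supp: "\<And>y. rho y \<noteq> 0 \<Longrightarrow> norm y \<le> 1"
    using assms unfolding bump_def by blast
  have "rho y \<le> max a 0" for y
    using a[of y] supp[of y] by (cases "rho y = 0") auto
  thus ?thesis by (rule that)
qed

lemma bump_measurable: "bump rho \<Longrightarrow> rho \<in> borel_measurable borel"
  by (rule borel_measurable_continuous_onI[OF bump_continuous])

lemma nu_delta_nonneg:
  fixes rho :: "'a::euclidean_space \<Rightarrow> real"
  assumes "\<And>y. rho y \<ge> 0" and "\<delta> > 0"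
  shows "nu_delta nu rho \<delta> x \<ge> 0"
  unfolding nu_delta_def using assms by (intro integral_nonneg_AE AE_I2 rho_delta_nonneg) auto

text \<open>Tonelli moves the mollifier onto the kernel; the kernel bound is only needed off \<open>x\<close>,
  which is a \<open>nu\<close>-null point.\<close>
lemma nn_integral_nu_delta_dist_powr_le:
  fixes nu :: "'a::euclidean_space measure" and s :: real
  assumes "finite_measure nu" and sets: "sets nu = sets borel"
    and [measurable]: "rho \<in> borel_measurable borel"
    and nonneg: "\<And>y. rho y \<ge> 0" and M: "\<And>y. rho y \<le> M" and \<delta>: "\<delta> > 0"
    and atom: "emeasure nu {x} = 0" and K: "K \<ge> 0"
    and kernel: "\<And>z. z \<noteq> x \<Longrightarrow>
       (\<integral>\<^sup>+y. ennreal (rho_delta rho \<delta> (y - z) * dist x y powr (-s)) \<partial>lborel)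
         \<le> ennreal (K * dist x z powr (-s))"
  shows "(\<integral>\<^sup>+y. ennreal (nu_delta nu rho \<delta> y * dist x y powr (-s)) \<partial>lborel)
    \<le> ennreal K * (\<integral>\<^sup>+z. ennreal (dist x z powr (-s)) \<partial>nu)"
proof -
  interpret finite_measure nu by fact
  interpret P: pair_sigma_finite lborel nu
    by (intro pair_sigma_finite.intro sigma_finite_lborel sigma_finite_measure_axioms)
  have [measurable_cong]: "sets nu = sets borel" by (rule sets)
  define F where "F y z = ennreal (rho_delta rho \<delta> (y - z) * dist x y powr (-s))" for y z
  have Fm: "case_prod F \<in> borel_measurable (lborel \<Otimes>\<^sub>M nu)"
    unfolding F_def rho_delta_def by measurable
  have inner: "ennreal (nu_delta nu rho \<delta> y * dist x y powr (-s)) = (\<integral>\<^sup>+z. F y z \<partial>nu)" for y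
  proof -
    have "norm (rho_delta rho \<delta> (y - z) * dist x y powr (-s)) \<le> M / \<delta> ^ DIM('a) * dist x y powr (-s)" for z
      using mult_right_mono[OF rho_delta_le[of rho, OF M \<delta>, of "y - z"] powr_ge_zero]
        rho_delta_nonneg[of rho, OF nonneg \<delta>] by (simp add: abs_mult)
    moreover have "(\<lambda>z. rho_delta rho \<delta> (y - z) * dist x y powr (-s)) \<in> borel_measurable nu"
      unfolding rho_delta_def by measurable
    ultimately have "integrable nu (\<lambda>z. rho_delta rho \<delta> (y - z) * dist x y powr (-s))"
      by (intro integrable_const_bound AE_I2)
    thus ?thesis
      unfolding F_def nu_delta_def integral_mult_left_zero[symmetric]
      using rho_delta_nonneg[of rho, OF nonneg \<delta>] by (intro nn_integral_eq_integral[symmetric]) auto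
  qed
  have "AE z in nu. z \<noteq> x"
    by (rule AE_I[of _ _ "{x}"]) (auto simp: atom sets)
  hence kernel_AE: "AE z in nu. (\<integral>\<^sup>+y. F y z \<partial>lborel) \<le> ennreal K * ennreal (dist x z powr (-s))"
    using kernel K unfolding F_def by (auto simp: ennreal_mult)
  have "(\<integral>\<^sup>+y. ennreal (nu_delta nu rho \<delta> y * dist x y powr (-s)) \<partial>lborel)
      = (\<integral>\<^sup>+z. (\<integral>\<^sup>+y. F y z \<partial>lborel) \<partial>nu)"
    unfolding inner by (rule P.Fubini'[OF Fm, symmetric])
  also have "\<dots> \<le> (\<integral>\<^sup>+z. ennreal K * ennreal (dist x z powr (-s)) \<partial>nu)"
    by (rule nn_integral_mono_AE[OF kernel_AE])
  also have "\<dots> = ennreal K * (\<integral>\<^sup>+z. ennreal (dist x z powr (-s)) \<partial>nu)"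
    by (intro nn_integral_cmult) measurable
  finally show ?thesis .
qed

lemma norm_nu_delta_beta_le:
  fixes nu :: "'a::euclidean_space measure" and \<beta> :: complex and s :: real
  assumes Re: "Re \<beta> = DIM('a) - s" and nonneg: "\<And>y. nu_delta nu rho \<delta> y \<ge> 0"
    and bound: "(\<integral>\<^sup>+y. ennreal (nu_delta nu rho \<delta> y * dist x y powr (-s)) \<partial>lborel) \<le> ennreal B"
    and B: "B \<ge> 0"
  shows "cmod (nu_delta_beta nu rho \<delta> \<beta> x) \<le> cmod (2 powr ((of_nat DIM('a) - \<beta>) / 2) / Gamma (\<beta> / 2)) * B"
proof -
  define f where "f y = of_real (nu_delta nu rho \<delta> y) * of_real (norm (x - y)) powr (\<beta> - of_nat DIM('a))" for y
  have "cmod (f y) = nu_delta nu rho \<delta> y * dist x y powr (-s)" for y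
    using nonneg[of y] Re by (simp add: f_def norm_mult norm_powr_real_powr dist_norm)
  hence "(\<integral>y. cmod (f y) \<partial>lborel) \<le> B"
    using bound B by (intro integral_real_bounded) auto
  hence "cmod (integral\<^sup>L lborel f) \<le> B"
    using integral_norm_bound[of lborel f] by linarith
  thus ?thesis
    unfolding nu_delta_beta_def f_def[symmetric] norm_mult by (intro mult_left_mono) auto
qed

theorem lemma3:
  fixes E :: "'a::euclidean_space set" and nu :: "'a measure" and s :: real
    and rho :: "'a \<Rightarrow> real" and \<alpha> :: complex
  assumes "0 < s" and "s < real DIM('a)"
    and "compact E" and "hausdorff_dim E > s"
    and "frostman nu E s"
    and "bump rho"
    and "Re \<alpha> = real DIM('a) - s"
  shows "\<exists>K. \<forall>\<delta>\<in>{0<..1}. \<forall>x. cmod (nu_delta_beta nu rho \<delta> \<alpha> x) \<le> K"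
proof -
  have "prob_space nu" and sets: "sets nu = sets borel"
    using assms(5) by (simp_all add: frostman_def)
  then interpret prob_space nu by simp
  have rho: "\<And>y. rho y \<ge> 0" "\<And>y. rho y \<noteq> 0 \<Longrightarrow> norm y \<le> 1"
    using assms(6) by (simp_all add: bump_def)
  note meas = bump_measurable[OF assms(6)]
  obtain M where M: "\<And>y. rho y \<le> M" using bump_bounded[OF assms(6)] by metis
  obtain K where K: "K \<ge> 0" and kernel: "\<And>x z \<delta>. \<delta> > 0 \<Longrightarrow> z \<noteq> x \<Longrightarrow>
      (\<integral>\<^sup>+y. ennreal (rho_delta rho \<delta> (y - z) * dist x y powr (-s)) \<partial>lborel)
        \<le> ennreal (K * dist x z powr (-s))"
    using nn_integral_rho_delta_dist_powr_le[OF meas rho M assms(1,2)] by metis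
  obtain N where N: "N \<ge> 0" and potential: "\<And>x. (\<integral>\<^sup>+z. ennreal (dist x z powr (-s)) \<partial>nu) \<le> ennreal N"
    using frostman_nn_integral_dist_powr_bounded[OF assms(5,1)] by metis
  show ?thesis
  proof (intro exI[of _ "cmod (2 powr ((of_nat DIM('a) - \<alpha>) / 2) / Gamma (\<alpha> / 2)) * (K * N)"] ballI allI)
    fix \<delta> x assume "\<delta> \<in> {0<..(1::real)}"
    hence \<delta>: "\<delta> > 0" by simp
    have "(\<integral>\<^sup>+y. ennreal (nu_delta nu rho \<delta> y * dist x y powr (-s)) \<partial>lborel)
        \<le> ennreal K * (\<integral>\<^sup>+z. ennreal (dist x z powr (-s)) \<partial>nu)"
      using frostman_emeasure_singleton[OF assms(5)] assms(1)
      by (intro nn_integral_nu_delta_dist_powr_le[OF finite_measure_axioms sets meas rho(1) M \<delta> _ K kernel[OF \<delta>]]) simp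
    also have "\<dots> \<le> ennreal K * ennreal N"
      using potential[of x] by (rule mult_left_mono) simp
    also have "\<dots> = ennreal (K * N)"
      using K N by (simp add: ennreal_mult)
    finally show "cmod (nu_delta_beta nu rho \<delta> \<alpha> x) \<le> cmod (2 powr ((of_nat DIM('a) - \<alpha>) / 2) / Gamma (\<alpha> / 2)) * (K * N)"
      using K N by (intro norm_nu_delta_beta_le[OF assms(7)] nu_delta_nonneg[OF rho(1) \<delta>]) auto
  qed
qed

end
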